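(* For every positive integer $k$, any deterministic distributed algorithm in the LOCAL model that finds a proper $4$-coloring of $G_k$ (for every assignment of unique identifiers to its vertices) requires at least $k=\frac{1}{8}(|V(G_k)|-2)$ rounds.
   Context: The planar graphs $G_k$ are defined inductively. $G_0$ has vertex set $\{v_{(0,1)},v_{(0,2)}\}$ and the single edge $\{v_{(0,1)},v_{(0,2)}\}$. For $i\ge 1$, $G_i$ is obtained from $G_{i-1}$ by adding, for each $j\in\{1,2\}$, four new vertices $a_{(i,j)},b_{(i,j)},c_{(i,j)},v_{(i,j)}$ and the edges $\{a_{(i,j)},b_{(i,j)}\},\{b_{(i,j)},c_{(i,j)}\},\{c_{(i,j)},a_{(i,j)}\}$, $\{a_{(i,j)},v_{(i,j)}\},\{b_{(i,j)},v_{(i,j)}\},\{c_{(i,j)},v_{(i,j)}\}$, $\{a_{(i,j)},v_{(i-1,j)}\},\{b_{(i,j)},v_{(i-1,j)}\},\{c_{(i,j)},v_{(i-1,j)}\}$. LOCAL model: the network is the graph, each vertex has a unique identifier, and in synchronous rounds each vertex receives the previous round's messages, computes arbitrarily and sends messages of unbounded size to its neighbors; at the end each vertex outputs its color. A proper $4$-coloring assigns colors in $\{1,2,3,4\}$ with adjacent vertices colored differently. *)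

theory Defs
  imports Complex_Main
begin

datatype vtx = Vx nat nat | Ax nat nat | Bx nat nat | Cx nat nat

primrec Gverts :: "nat \<Rightarrow> vtx set" where
  "Gverts 0 = {Vx 0 1, Vx 0 2}"
| "Gverts (Suc i) = Gverts i \<union>
     (\<Union>j\<in>{1,2}. {Ax (Suc i) j, Bx (Suc i) j, Cx (Suc i) j, Vx (Suc i) j})"

primrec Gedges :: "nat \<Rightarrow> vtx set set" where
  "Gedges 0 = {{Vx 0 1, Vx 0 2}}"
| "Gedges (Suc i) = Gedges i \<union>
     (\<Union>j\<in>{1,2}.
       {{Ax (Suc i) j, Bx (Suc i) j}, {Bx (Suc i) j, Cx (Suc i) j}, {Cx (Suc i) j, Ax (Suc i) j},
        {Ax (Suc i) j, Vx (Suc i) j}, {Bx (Suc i) j, Vx (Suc i) j}, {Cx (Suc i) j, Vx (Suc i) j},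
        {Ax (Suc i) j, Vx i j}, {Bx (Suc i) j, Vx i j}, {Cx (Suc i) j, Vx i j}})"

definition Gadj :: "nat \<Rightarrow> vtx \<Rightarrow> vtx \<Rightarrow> bool" where
  "Gadj k u v \<longleftrightarrow> {u, v} \<in> Gedges k"

text \<open>Synchronous execution of a deterministic LOCAL algorithm (full-information form).
  A node starts in state init (its identifier); in every round each node sends its
  current state (messages of unbounded size) to all neighbours, and then updates its
  state by an arbitrary function step of its own state and the set of received messages.
  run adj init step ident t v is the state of node v after t rounds.\<close>
primrec run :: "('v \<Rightarrow> 'v \<Rightarrow> bool) \<Rightarrow> (nat \<Rightarrow> 's) \<Rightarrow> ('s \<Rightarrow> 's set \<Rightarrow> 's)
                 \<Rightarrow> ('v \<Rightarrow> nat) \<Rightarrow> nat \<Rightarrow> 'v \<Rightarrow> 's" where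
  "run adj init step ident 0 v = init (ident v)"
| "run adj init step ident (Suc t) v =
     step (run adj init step ident t v) ((\<lambda>u. run adj init step ident t u) ` {u. adj u v})"

definition proper4 :: "'v set \<Rightarrow> 'v set set \<Rightarrow> ('v \<Rightarrow> nat) \<Rightarrow> bool" where
  "proper4 V E c \<longleftrightarrow> (\<forall>v\<in>V. c v \<in> {1..4}) \<and> (\<forall>u w. {u, w} \<in> E \<longrightarrow> c u \<noteq> c w)"

end

(*
  In a proper 4-colouring of G_k, the triangle a_(i,j) b_(i,j) c_(i,j) takes three colours, so
  v_(i-1,j) and v_(i,j), both adjacent to all of it, take the fourth.  Hence v_(k,1) and v_(k,2)
  inherit the distinct colours of the edge v_(0,1) v_(0,2).

  Swapping the two sides j = 1, 2 is an automorphism of G_k, and after r <= 2k rounds the state of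
  v_(k,1) depends only on identifiers on its own side.  Code each vertex by its orbit under the
  swap, tagged with a on side 1 and with b on side 2.  Then v_(k,1) computes what it would under
  the swap-invariant assignment tagged a everywhere, and v_(k,2) what v_(k,1) would under the one
  tagged b.  Among five tags two yield the same colour, and for that pair v_(k,1) and v_(k,2)
  collide.  So in fact 2k < r.
*)
theory Submission
  imports Defs "HOL-Library.Countable" "HOL-Combinatorics.Transposition"
begin

instance vtx :: countable by countable_datatype

primrec nbhd :: "('v \<Rightarrow> 'v \<Rightarrow> bool) \<Rightarrow> nat \<Rightarrow> 'v \<Rightarrow> 'v set" where
  "nbhd adj 0 v = {v}"
| "nbhd adj (Suc t) v = nbhd adj t v \<union> (\<Union>u\<in>{u. adj u v}. nbhd adj t u)"

lemma run_cong_nbhd: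
  assumes "\<forall>u\<in>nbhd adj t v. ident u = ident' u"
  shows "run adj init step ident t v = run adj init step ident' t v"
  using assms
proof (induction t arbitrary: v)
  case (Suc t)
  then have "(\<lambda>u. run adj init step ident t u) ` {u. adj u v}
           = (\<lambda>u. run adj init step ident' t u) ` {u. adj u v}"
    by (intro image_cong) auto
  with Suc show ?case by simp
qed simp

lemma run_comp_automorphism:
  assumes "surj s" and adj_s: "\<And>u w. adj (s u) (s w) = adj u w"
  shows "run adj init step (ident \<circ> s) t v = run adj init step ident t (s v)"
proof (induction t arbitrary: v)
  case (Suc t)
  have "s ` {u. adj u v} = {w. adj w (s v)}"
  proof (intro equalityI subsetI)
    fix w assume "w \<in> {w. adj w (s v)}"
    moreover obtain u where "w = s u"
      using \<open>surj s\<close> by (metis surjD)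
    ultimately show "w \<in> s ` {u. adj u v}"
      by (simp add: adj_s)
  qed (auto simp: adj_s)
  then have "(\<lambda>u. run adj init step ident t (s u)) ` {u. adj u v}
           = (\<lambda>w. run adj init step ident t w) ` {w. adj w (s v)}"
    by (metis image_image)
  with Suc show ?case by simp
qed simp

lemma proper4_triangle_neighbours_same_colour:
  assumes col: "proper4 V E col" and E_V: "\<forall>e\<in>E. e \<subseteq> V"
    and gadget: "{{a, b}, {b, d}, {d, a}, {a, x}, {b, x}, {d, x}, {a, y}, {b, y}, {d, y}} \<subseteq> E"
  shows "col x = col y"
proof -
  have "{a, b, d, x, y} \<subseteq> V"
    using gadget E_V by (simp add: insert_subset) blast
  then have colours: "col ` {a, b, d, x, y} \<subseteq> {1..4}"
    using col unfolding proper4_def by blast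
  have distinct: "col a \<noteq> col b" "col b \<noteq> col d" "col d \<noteq> col a"
      "col a \<noteq> col x" "col b \<noteq> col x" "col d \<noteq> col x"
      "col a \<noteq> col y" "col b \<noteq> col y" "col d \<noteq> col y"
    using col gadget unfolding proper4_def by (simp_all add: insert_subset)
  \<comment> \<open>the triangle and x use up all four colours\<close>
  have all_used: "{col a, col b, col d, col x} = {1..4}"
    using colours distinct by (intro card_subset_eq) auto
  have "col y \<in> {col a, col b, col d, col x}"
    using colours by (simp add: all_used)
  then show ?thesis
    using distinct by auto
qed

definition orbit_code :: "('v::countable \<Rightarrow> 'v) \<Rightarrow> 'v \<Rightarrow> nat" where
  "orbit_code s u = min (to_nat u) (to_nat (s u))"

lemma orbit_code_apply: "(\<And>u. s (s u) = u) \<Longrightarrow> orbit_code s (s u) = orbit_code s u"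
  by (simp add: orbit_code_def min.commute)

lemma inj_on_orbit_code:
  assumes s_inv: "\<And>u. s (s u) = u" and disjoint: "P \<inter> s ` P = {}"
  shows "inj_on (orbit_code s) P"
proof (rule inj_onI)
  fix u w assume "u \<in> P" "w \<in> P" "orbit_code s u = orbit_code s w"
  then have "u = w \<or> u = s w \<or> s u = w \<or> s u = s w"
    unfolding orbit_code_def min_def by (auto split: if_splits)
  with \<open>u \<in> P\<close> \<open>w \<in> P\<close> disjoint s_inv show "u = w"
    by (metis disjoint_iff image_eqI)
qed

lemma inj_on_orbit_code_tagged:
  assumes s_inv: "\<And>u. s (s u) = u" and V: "V \<subseteq> P \<union> s ` P" and disjoint: "P \<inter> s ` P = {}"
    and "a \<noteq> b"
  shows "inj_on (\<lambda>u. prod_encode (orbit_code s u, if u \<in> P then a else b)) V"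
proof (rule inj_onI)
  fix u w
  assume "u \<in> V" "w \<in> V"
    and "prod_encode (orbit_code s u, if u \<in> P then a else b)
       = prod_encode (orbit_code s w, if w \<in> P then a else b)"
  then have same_side: "u \<in> P \<longleftrightarrow> w \<in> P" and code: "orbit_code s u = orbit_code s w"
    using \<open>a \<noteq> b\<close> by (auto split: if_splits)
  show "u = w"
  proof (cases "u \<in> P")
    case True
    with same_side code show ?thesis
      using inj_on_orbit_code[OF s_inv disjoint] by (auto dest: inj_onD)
  next
    case False
    with same_side V \<open>u \<in> V\<close> \<open>w \<in> V\<close> have "s u \<in> P" "s w \<in> P"
      using s_inv by (auto simp: image_iff)
    moreover have "orbit_code s (s u) = orbit_code s (s w)"
      using code by (simp add: orbit_code_apply s_inv)
    ultimately have "s u = s w"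
      using inj_on_orbit_code[OF s_inv disjoint] by (auto dest: inj_onD)
    then show ?thesis
      by (metis s_inv)
  qed
qed

lemma ex_inj_ident_same_output_at_mirror:
  fixes s :: "'v::countable \<Rightarrow> 'v" and C :: "'o set"
  assumes s_inv: "\<And>u. s (s u) = u" and adj_s: "\<And>u w. adj (s u) (s w) = adj u w"
    and V: "V \<subseteq> P \<union> s ` P" and disjoint: "P \<inter> s ` P = {}"
    and nbhd_P: "nbhd adj t v \<subseteq> P"
    and "finite C"
    and outputs: "\<And>ident. inj_on ident V \<Longrightarrow> out (run adj init step ident t v) \<in> C"
  shows "\<exists>ident. inj_on ident V \<and>
           out (run adj init step ident t v) = out (run adj init step ident t (s v))"
proof -
  define sym_ident where "sym_ident a u = prod_encode (orbit_code s u, a)" for a :: nat and u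
  define ident where "ident a b u = prod_encode (orbit_code s u, if u \<in> P then a else b)"
    for a b u
  have ident_inj: "inj_on (ident a b) V" if "a \<noteq> b" for a b
    unfolding ident_def using inj_on_orbit_code_tagged[OF s_inv V disjoint that] .
  have at_v: "run adj init step (ident a b) t v = run adj init step (sym_ident a) t v" for a b
    using nbhd_P by (intro run_cong_nbhd) (auto simp: ident_def sym_ident_def)
  have "run adj init step (ident a b) t (s v) = run adj init step (ident a b \<circ> s) t v" for a b
    using s_inv adj_s by (intro run_comp_automorphism[symmetric] surjI)
  also have "\<dots> a b = run adj init step (sym_ident b) t v" for a b
    using nbhd_P disjoint s_inv
    by (intro run_cong_nbhd) (auto simp: ident_def sym_ident_def orbit_code_apply)
  finally have at_s_v:
    "run adj init step (ident a b) t (s v) = run adj init step (sym_ident b) t v" for a b .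
  define col where "col a = out (run adj init step (sym_ident a) t v)" for a
  have "col a \<in> C" for a
    using outputs[OF ident_inj[of a "Suc a"]] by (simp add: at_v col_def)
  then have "\<not> inj_on col {..card C}"
    using card_inj_on_le[of col "{..card C}" C] \<open>finite C\<close> by auto
  then obtain a b where "a \<noteq> b" "col a = col b"
    unfolding inj_on_def by blast
  then show ?thesis
    using ident_inj at_v at_s_v unfolding col_def by metis
qed

fun swap_side :: "vtx \<Rightarrow> vtx" where
  "swap_side (Vx i j) = Vx i (transpose 1 2 j)"
| "swap_side (Ax i j) = Ax i (transpose 1 2 j)"
| "swap_side (Bx i j) = Bx i (transpose 1 2 j)"
| "swap_side (Cx i j) = Cx i (transpose 1 2 j)"

fun side :: "vtx \<Rightarrow> nat" where
  "side (Vx i j) = j"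
| "side (Ax i j) = j"
| "side (Bx i j) = j"
| "side (Cx i j) = j"

(* depth u is the distance in G_k from u to the nearest vertex of the other side. *)
fun depth :: "vtx \<Rightarrow> nat" where
  "depth (Vx i j) = 2 * i + 1"
| "depth (Ax i j) = 2 * i"
| "depth (Bx i j) = 2 * i"
| "depth (Cx i j) = 2 * i"

lemma swap_side_swap_side [simp]: "swap_side (swap_side u) = u"
  by (cases u) simp_all

lemma side_swap_side [simp]: "side (swap_side u) = transpose 1 2 (side u)"
  by (cases u) simp_all

definition gadget_edges :: "nat \<Rightarrow> nat \<Rightarrow> vtx set set" where
  "gadget_edges i j =
     {{Ax (Suc i) j, Bx (Suc i) j}, {Bx (Suc i) j, Cx (Suc i) j}, {Cx (Suc i) j, Ax (Suc i) j},
      {Ax (Suc i) j, Vx (Suc i) j}, {Bx (Suc i) j, Vx (Suc i) j}, {Cx (Suc i) j, Vx (Suc i) j},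
      {Ax (Suc i) j, Vx i j}, {Bx (Suc i) j, Vx i j}, {Cx (Suc i) j, Vx i j}}"

lemma Gedges_Suc: "Gedges (Suc i) = Gedges i \<union> (\<Union>j\<in>{1, 2}. gadget_edges i j)"
  by (simp add: gadget_edges_def)

lemma swap_side_gadget_edges: "image swap_side ` gadget_edges i j = gadget_edges i (transpose 1 2 j)"
  by (simp add: gadget_edges_def)

lemma swap_side_Gedges: "e \<in> Gedges k \<Longrightarrow> swap_side ` e \<in> Gedges k"
proof (induction k)
  case 0
  then show ?case
    by (simp add: insert_commute)
next
  case (Suc k)
  show ?case
  proof (cases "e \<in> Gedges k")
    case False
    with Suc.prems obtain j where "j \<in> {1, 2}" "e \<in> gadget_edges k j"
      unfolding Gedges_Suc by blast
    have "swap_side ` e \<in> gadget_edges k (transpose 1 2 j)"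
      using \<open>e \<in> gadget_edges k j\<close> by (metis imageI swap_side_gadget_edges)
    moreover have "transpose 1 2 j \<in> {1, 2}"
      using \<open>j \<in> {1, 2}\<close> by auto
    ultimately show ?thesis
      unfolding Gedges_Suc by blast
  qed (use Suc.IH in \<open>simp add: Gedges_Suc\<close>)
qed

lemma Gadj_swap_side [simp]: "Gadj k (swap_side u) (swap_side w) = Gadj k u w"
  using swap_side_Gedges[of "{u, w}" k] swap_side_Gedges[of "{swap_side u, swap_side w}" k]
  by (auto simp: Gadj_def)

lemma side_Gverts: "u \<in> Gverts k \<Longrightarrow> side u \<in> {1, 2}"
  by (induction k) auto

lemma depth_Gverts: "u \<in> Gverts k \<Longrightarrow> depth u \<le> 2 * k + 1"
  by (induction k) auto

lemma Vx_Gverts: "i \<le> k \<Longrightarrow> j \<in> {1, 2} \<Longrightarrow> Vx i j \<in> Gverts k"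
  by (induction k) (auto simp: le_Suc_eq)

lemma Union_Gedges_subset_Gverts: "\<Union> (Gedges k) \<subseteq> Gverts k"
  by (induction k) (auto simp: Vx_Gverts)

lemma Gedges_mono: "m \<le> k \<Longrightarrow> Gedges m \<subseteq> Gedges k"
  by (rule lift_Suc_mono_le[of Gedges]) auto

lemma card_Gverts: "card (Gverts k) = 8 * k + 2"
proof (induction k)
  case (Suc k)
  let ?new = "\<Union>j\<in>{1, 2}. {Ax (Suc k) j, Bx (Suc k) j, Cx (Suc k) j, Vx (Suc k) j}"
  have "finite (Gverts k)"
    by (induction k) auto
  moreover have "Gverts k \<inter> ?new = {}"
    using depth_Gverts by fastforce
  moreover have "card ?new = 8"
    by simp
  ultimately show ?case
    using Suc by (simp add: card_Un_disjoint)
qed simp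

lemma Gedges_same_side:
  "{w, v} \<in> Gedges k \<Longrightarrow> 1 < depth v \<Longrightarrow> side w = side v \<and> depth v \<le> Suc (depth w)"
  by (induction k) (auto simp: doubleton_eq_iff)

lemma nbhd_Gadj_same_side: "u \<in> nbhd (Gadj k) t v \<Longrightarrow> t < depth v \<Longrightarrow> side u = side v"
proof (induction t arbitrary: v)
  case (Suc t)
  show ?case
  proof (cases "u \<in> nbhd (Gadj k) t v")
    case False
    with Suc.prems obtain w where "Gadj k w v" "u \<in> nbhd (Gadj k) t w"
      by auto
    moreover from \<open>Gadj k w v\<close> Suc.prems have "side w = side v" "t < depth w"
      using Gedges_same_side[of w v k] by (auto simp: Gadj_def)
    ultimately show ?thesis
      using Suc.IH by simp
  qed (use Suc in simp)
qed simp

lemma proper4_G_Vx_Suc: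
  assumes "proper4 (Gverts k) (Gedges k) col" "i < k" "j \<in> {1, 2}"
  shows "col (Vx (Suc i) j) = col (Vx i j)"
proof (rule proper4_triangle_neighbours_same_colour[OF assms(1)])
  show "\<forall>e\<in>Gedges k. e \<subseteq> Gverts k"
    using Union_Gedges_subset_Gverts by blast
  have "gadget_edges i j \<subseteq> Gedges (Suc i)"
    using assms(3) unfolding Gedges_Suc by blast
  also have "\<dots> \<subseteq> Gedges k"
    using assms(2) by (intro Gedges_mono) simp
  finally show "{{Ax (Suc i) j, Bx (Suc i) j}, {Bx (Suc i) j, Cx (Suc i) j}, {Cx (Suc i) j, Ax (Suc i) j},
      {Ax (Suc i) j, Vx (Suc i) j}, {Bx (Suc i) j, Vx (Suc i) j}, {Cx (Suc i) j, Vx (Suc i) j},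
      {Ax (Suc i) j, Vx i j}, {Bx (Suc i) j, Vx i j}, {Cx (Suc i) j, Vx i j}} \<subseteq> Gedges k"
    by (simp only: gadget_edges_def)
qed

lemma proper4_G_Vx_eq_Vx0:
  assumes "proper4 (Gverts k) (Gedges k) col" "j \<in> {1, 2}"
  shows "i \<le> k \<Longrightarrow> col (Vx i j) = col (Vx 0 j)"
proof (induction i)
  case (Suc i)
  then show ?case
    using proper4_G_Vx_Suc[OF assms(1), of i j] assms(2) by simp
qed simp

lemma proper4_G_top_colours_differ:
  assumes "proper4 (Gverts k) (Gedges k) col"
  shows "col (Vx k 1) \<noteq> col (Vx k 2)"
proof -
  have "{Vx 0 1, Vx 0 2} \<in> Gedges k"
    using Gedges_mono[of 0 k] by simp
  then have "col (Vx 0 1) \<noteq> col (Vx 0 2)"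
    using assms unfolding proper4_def by blast
  then show ?thesis
    using proper4_G_Vx_eq_Vx0[OF assms, of 1 k] proper4_G_Vx_eq_Vx0[OF assms, of 2 k] by simp
qed

lemma G_four_colouring_rounds_gt:
  assumes "\<forall>ident. inj_on ident (Gverts k) \<longrightarrow>
             proper4 (Gverts k) (Gedges k) (\<lambda>v. out (run (Gadj k) init step ident r v))"
  shows "2 * k < r"
proof (rule ccontr)
  assume "\<not> 2 * k < r"
  let ?P = "{u. side u = 1}"
  have mirror: "swap_side ` ?P = {u. side u = 2}"
  proof (intro equalityI subsetI)
    fix u assume "u \<in> {u. side u = 2}"
    then have "u = swap_side (swap_side u)" "swap_side u \<in> ?P"
      by simp_all
    then show "u \<in> swap_side ` ?P"
      by (rule image_eqI)
  qed auto
  have V: "Gverts k \<subseteq> ?P \<union> swap_side ` ?P"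
    using side_Gverts mirror by blast
  have disjoint: "?P \<inter> swap_side ` ?P = {}"
    using mirror by auto
  have nbhd_P: "nbhd (Gadj k) r (Vx k 1) \<subseteq> ?P"
    using nbhd_Gadj_same_side[of _ k r "Vx k 1"] \<open>\<not> 2 * k < r\<close> by auto
  have outputs: "out (run (Gadj k) init step ident r (Vx k 1)) \<in> {1..4}"
    if "inj_on ident (Gverts k)" for ident
    using assms that Vx_Gverts[of k k 1] unfolding proper4_def by auto
  obtain ident where "inj_on ident (Gverts k)"
    and same: "out (run (Gadj k) init step ident r (Vx k 1))
             = out (run (Gadj k) init step ident r (Vx k 2))"
    using ex_inj_ident_same_output_at_mirror[where s = swap_side and adj = "Gadj k" and out = out,
        OF swap_side_swap_side Gadj_swap_side V disjoint nbhd_P finite_atLeastAtMost outputs]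
    by auto
  then have "proper4 (Gverts k) (Gedges k) (\<lambda>v. out (run (Gadj k) init step ident r v))"
    using assms by blast
  then have "out (run (Gadj k) init step ident r (Vx k 1))
           \<noteq> out (run (Gadj k) init step ident r (Vx k 2))"
    by (rule proper4_G_top_colours_differ)
  with same show False
    by contradiction
qed

theorem lemma6p5:
  fixes k r :: nat
    and init :: "nat \<Rightarrow> 's"
    and step :: "'s \<Rightarrow> 's set \<Rightarrow> 's"
    and out :: "'s \<Rightarrow> nat"
  assumes "k \<ge> 1"
    and "\<forall>ident. inj_on ident (Gverts k) \<longrightarrow>
           proper4 (Gverts k) (Gedges k) (\<lambda>v. out (run (Gadj k) init step ident r v))"
  shows "k \<le> r \<and> real k = (real (card (Gverts k)) - 2) / 8"
proof
  show "k \<le> r"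
    using G_four_colouring_rounds_gt[OF assms(2)] by simp
  show "real k = (real (card (Gverts k)) - 2) / 8"
    by (simp add: card_Gverts)
qed

end
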